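(* Let $\{\mathcal B^{(n)}\}_{n\in\mathbb N}$ be a sequence of infinite matrices $\mathcal B^{(n)}=(\mathcal B^{(n)}_{r,s})_{r,s\ge0}$ and let $b\in\mathbb N$ be such that $\mathcal B^{(n)}_{rs}=0$ whenever $|r-s|>b$, for all $n$. Let $\mathcal B^R$ be a right limit of $\{\mathcal B^{(n)}\}$ along a subsequence $\{n_j\}_j$, and let $M\in\mathbb N$. Then $$\lim_{j\to\infty}C_m^{(n_j)}(\mathcal B^{(n_j)})=D_m(\mathcal B^R_{bM})\quad\text{for }m=1,\dots,M.$$
   Context: $\mathcal B^R=(\mathcal B^R_{r,s})_{r,s\in\mathbb Z}$ is a right limit along $\{n_j\}$ if $\mathcal B^R_{r,s}=\lim_j\mathcal B^{(n_j)}_{n_j+r,n_j+s}$ for all $r,s\in\mathbb Z$ and $\mathcal B^R$ is bounded on $\ell^2(\mathbb Z)$. $\mathcal B^R_{N}$ is the truncation equal to $\mathcal B^R_{r,s}$ for $r,s\in\{-N,\dots,N\}$ and $0$ otherwise. $P_n$ is the projection onto the coordinates $0,\dots,n-1$; $P_-$ on $\ell^2(\mathbb Z)$ is the projection onto coordinates $r<0$. For $m\ge1$, $$C_m^{(n)}(\mathcal B)=\sum_{j=2}^m\frac{(-1)^j}{j}\sum_{\substack{l_1+\dots+l_j=m\\ l_i\ge1}}\frac{\operatorname{Tr}\mathcal B^{l_1}P_n\cdots\mathcal B^{l_j}P_n-\operatorname{Tr}\mathcal B^mP_n}{l_1!\cdots l_j!}$$ (zero for $m=1$), and for a finite-rank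 operator $F$ on $\ell^2(\mathbb Z)$, $$D_m(F)=\sum_{j=1}^m\frac{(-1)^j}{j}\sum_{\substack{l_1+\dots+l_j=m\\ l_i\ge1}}\frac{\operatorname{Tr}\big(\prod_{t=1}^jP_-F^{l_t}P_--P_-F^mP_-\big)}{l_1!\cdots l_j!}.$$ *)

theory Defs
  imports "HOL-Analysis.Analysis"
begin

text \<open>Infinite matrices over an index type 'i (nat for l^2(N), int for l^2(Z)),
  with complex entries. Products are given by the (possibly infinite) sum over
  the middle index; for the banded / finitely supported matrices occurring
  here these sums are finite.\<close>

type_synonym 'i imat = "'i \<Rightarrow> 'i \<Rightarrow> complex"

definition mmult :: "'i imat \<Rightarrow> 'i imat \<Rightarrow> 'i imat" where
  "mmult A B = (\<lambda>r t. \<Sum>\<^sub>\<infinity>k. A r k * B k t)"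

definition mone :: "'i imat" where
  "mone = (\<lambda>r t. if r = t then 1 else 0)"

fun mpow :: "'i imat \<Rightarrow> nat \<Rightarrow> 'i imat" where
  "mpow A 0 = mone"
| "mpow A (Suc l) = mmult A (mpow A l)"

definition mdiff :: "'i imat \<Rightarrow> 'i imat \<Rightarrow> 'i imat" where
  "mdiff A B = (\<lambda>r t. A r t - B r t)"

definition mtrace :: "'i imat \<Rightarrow> complex" where
  "mtrace A = (\<Sum>\<^sub>\<infinity>r. A r r)"

definition proj :: "'i set \<Rightarrow> 'i imat" where
  "proj S = (\<lambda>r t. if r = t \<and> r \<in> S then 1 else 0)"

definition Pn :: "nat \<Rightarrow> nat imat" where
  "Pn n = proj {..<n}"

definition Pminus :: "int imat" where
  "Pminus = proj {r. r < 0}"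

definition mprod_list :: "'i imat list \<Rightarrow> 'i imat" where
  "mprod_list As = foldr mmult As mone"

definition comps :: "nat \<Rightarrow> nat \<Rightarrow> nat list set" where
  "comps m j = {ls. length ls = j \<and> (\<forall>l\<in>set ls. l \<ge> 1) \<and> sum_list ls = m}"

definition factprod :: "nat list \<Rightarrow> complex" where
  "factprod ls = (\<Prod>l\<leftarrow>ls. of_nat (fact l))"

definition Cm :: "nat \<Rightarrow> nat \<Rightarrow> nat imat \<Rightarrow> complex" where
  "Cm m n B = (\<Sum>j=2..m. ((-1)^j / of_nat j) *
      (\<Sum>ls\<in>comps m j.
         (mtrace (mprod_list (map (\<lambda>l. mmult (mpow B l) (Pn n)) ls))
          - mtrace (mmult (mpow B m) (Pn n))) / factprod ls))"

definition Dm :: "nat \<Rightarrow> int imat \<Rightarrow> complex" where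
  "Dm m F = (\<Sum>j=1..m. ((-1)^j / of_nat j) *
      (\<Sum>ls\<in>comps m j.
         mtrace (mdiff (mprod_list (map (\<lambda>l. mmult (mmult Pminus (mpow F l)) Pminus) ls))
                       (mmult (mmult Pminus (mpow F m)) Pminus)) / factprod ls))"

definition l2_bounded :: "int imat \<Rightarrow> bool" where
  "l2_bounded A \<longleftrightarrow> (\<exists>C. \<forall>x :: int \<Rightarrow> complex. finite {s. x s \<noteq> 0} \<longrightarrow>
      ((\<lambda>r. (norm (\<Sum>\<^sub>\<infinity>s. A r s * x s))\<^sup>2) summable_on UNIV) \<and>
      (\<Sum>\<^sub>\<infinity>r. (norm (\<Sum>\<^sub>\<infinity>s. A r s * x s))\<^sup>2) \<le> C\<^sup>2 * (\<Sum>\<^sub>\<infinity>s. (norm (x s))\<^sup>2))"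

text \<open>Entries of a matrix on N, viewed with integer indices (0 at negative indices,
  which only matters for finitely many j since n_j \<rightarrow> \<infinity>).\<close>
definition ext_int :: "nat imat \<Rightarrow> int imat" where
  "ext_int A = (\<lambda>r s. if r \<ge> 0 \<and> s \<ge> 0 then A (nat r) (nat s) else 0)"

definition right_limit :: "(nat \<Rightarrow> nat imat) \<Rightarrow> (nat \<Rightarrow> nat) \<Rightarrow> int imat \<Rightarrow> bool" where
  "right_limit B ns BR \<longleftrightarrow> strict_mono ns \<and>
     (\<forall>r s. (\<lambda>j. ext_int (B (ns j)) (int (ns j) + r) (int (ns j) + s)) \<longlonglongrightarrow> BR r s) \<and>
     l2_bounded BR"

definition trunc :: "int imat \<Rightarrow> nat \<Rightarrow> int imat" where
  "trunc A N = (\<lambda>r s. if \<bar>r\<bar> \<le> int N \<and> \<bar>s\<bar> \<le> int N then A r s else 0)"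

end

theory Submission
  imports Defs
begin

text \<open>
  Shifting indices by n turns P_n into P_- and B^(n) into a band-b matrix A on \<int>, and each
  term of C_m^(n) into a trace defect tr(A^l1 P_- ... A^lj P_-) - tr(A^m P_-). The diagonal
  entry (r,r) of a product of band-b matrices of total degree m only involves indices p with
  2|p - r| \<le> bm. If 2r + bm < 0 all of them are negative, the factors P_- act as the identity
  and the defect vanishes at r; otherwise they lie in [-bM, bM], so A may be replaced by its
  truncation A_bM. The truncated defects are finite sums of entries of products of banded
  matrices, hence continuous under the entrywise convergence that defines the right limit.
  On the D_m side the P_- in front of each factor is absorbed and the term j = 1 vanishes,
  which yields the same combination of defects of B^R_bM.
\<close>

lemma infsum_eq_sum_support:
  assumes "finite S" "\<And>x. x \<notin> S \<Longrightarrow> f x = 0"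
  shows "infsum f UNIV = sum f S"
proof -
  have "infsum f UNIV = infsum f S"
    by (rule infsum_cong_neutral) (use assms in auto)
  then show ?thesis
    using assms(1) by simp
qed

lemma infsum_eq_single:
  assumes "\<And>x. x \<noteq> a \<Longrightarrow> f x = 0"
  shows "infsum f UNIV = f a"
  using infsum_eq_sum_support[of "{a}" f] assms by auto

lemma mmult_mone_right [simp]: "mmult X mone = X"
  unfolding mmult_def mone_def by (intro ext, subst infsum_eq_single) auto

lemma mmult_mone_left [simp]: "mmult mone X = X"
  unfolding mmult_def mone_def by (intro ext, subst infsum_eq_single) auto

lemma mmult_proj_right: "mmult X (proj S) r t = (if t \<in> S then X r t else 0)"
  unfolding mmult_def proj_def by (subst infsum_eq_single[where a = t]) auto

lemma mmult_proj_left: "mmult (proj S) X r t = (if r \<in> S then X r t else 0)"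
  unfolding mmult_def proj_def by (subst infsum_eq_single[where a = r]) auto

lemma mmult_row_zero: "(\<And>k. A r k = 0) \<Longrightarrow> mmult A X r t = 0"
  unfolding mmult_def by (rule infsum_0) auto

lemma mmult_col_zero: "(\<And>k. X k t = 0) \<Longrightarrow> mmult A X r t = 0"
  unfolding mmult_def by (rule infsum_0) auto

lemma mmult_proj_assoc: "mmult (mmult (proj S) X) Y = mmult (proj S) (mmult X Y)"
  by (intro ext) (simp add: mmult_proj_left mmult_def[of "mmult (proj S) X"], simp add: mmult_def)

lemma mmult_proj_absorb:
  assumes "\<And>r k. k \<notin> S \<Longrightarrow> X r k = 0"
  shows "mmult X (mmult (proj S) Y) = mmult X Y"
  unfolding mmult_def[of X] by (intro ext infsum_cong) (simp add: mmult_proj_left assms)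

lemma mprod_list_Nil [simp]: "mprod_list [] = mone"
  by (simp add: mprod_list_def)

lemma mprod_list_Cons [simp]: "mprod_list (X # Xs) = mmult X (mprod_list Xs)"
  by (simp add: mprod_list_def)

lemma mprod_list_map_proj_left:
  assumes "Ys \<noteq> []" "\<And>Y r k. Y \<in> set Ys \<Longrightarrow> k \<notin> S \<Longrightarrow> Y r k = 0"
  shows "mprod_list (map (mmult (proj S)) Ys) = mmult (proj S) (mprod_list Ys)"
  using assms
proof (induction Ys)
  case (Cons Y Ys)
  show ?case
  proof (cases "Ys = []")
    case False
    then have "mprod_list (map (mmult (proj S)) (Y # Ys))
        = mmult (proj S) (mmult Y (mmult (proj S) (mprod_list Ys)))"
      using Cons by (simp add: mmult_proj_assoc)
    also have "\<dots> = mmult (proj S) (mprod_list (Y # Ys))"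
      using Cons.prems(2) by (simp add: mmult_proj_absorb)
    finally show ?thesis .
  qed simp
qed simp

section \<open>Banded matrices on \<int>\<close>

definition banded :: "int imat \<Rightarrow> nat \<Rightarrow> bool" where
  "banded A w \<longleftrightarrow> (\<forall>r s. \<bar>r - s\<bar> > int w \<longrightarrow> A r s = 0)"

lemma banded_mone: "banded mone w"
  unfolding banded_def mone_def by auto

lemma banded_proj: "banded (proj S) w"
  unfolding banded_def proj_def by auto

lemma banded_trunc: "banded A w \<Longrightarrow> banded (trunc A N) w"
  unfolding banded_def trunc_def by auto

lemma mmult_banded_eq_sum:
  assumes "banded A w" "finite S" "{r - int w..r + int w} \<subseteq> S"
  shows "mmult A X r t = (\<Sum>k\<in>S. A r k * X k t)"
  unfolding mmult_def
proof (rule infsum_eq_sum_support)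
  fix k assume "k \<notin> S"
  then have "k \<notin> {r - int w..r + int w}"
    using assms(3) by blast
  then have "\<bar>r - k\<bar> > int w"
    by auto
  then show "A r k * X k t = 0"
    using assms(1) by (simp add: banded_def)
qed (use assms in auto)

lemma banded_mmult: "banded A w \<Longrightarrow> banded B v \<Longrightarrow> banded (mmult A B) (w + v)"
  unfolding banded_def mmult_def
proof (intro allI impI infsum_0)
  fix r s k
  assume "\<forall>r s. int w < \<bar>r - s\<bar> \<longrightarrow> A r s = 0" "\<forall>r s. int v < \<bar>r - s\<bar> \<longrightarrow> B r s = 0"
    and "int (w + v) < \<bar>r - s\<bar>"
  then show "A r k * B k s = 0"
    by (cases "\<bar>r - k\<bar> > int w") auto
qed

lemma banded_mpow: "banded A w \<Longrightarrow> banded (mpow A l) (l * w)"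
proof (induction l)
  case (Suc l)
  then show ?case
    using banded_mmult[of A w "mpow A l" "l * w"] by simp
qed (simp add: banded_mone)

lemma mmult_assoc_banded:
  assumes A: "banded A w" and B: "banded B v"
  shows "mmult (mmult A B) C = mmult A (mmult B C)"
proof (intro ext)
  fix r t
  define S where "S = {r - int (w + v)..r + int (w + v)}"
  define S1 where "S1 = {r - int w..r + int w}"
  have "mmult (mmult A B) C r t = (\<Sum>k\<in>S. (\<Sum>k'\<in>S1. A r k' * B k' k) * C k t)"
    by (subst mmult_banded_eq_sum[OF banded_mmult[OF A B], of S])
      (auto simp: S_def S1_def mmult_banded_eq_sum[OF A, of S1] intro!: sum.cong)
  also have "\<dots> = (\<Sum>k'\<in>S1. A r k' * (\<Sum>k\<in>S. B k' k * C k t))"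
    by (simp add: sum_distrib_left sum_distrib_right mult.assoc sum.swap[of _ S])
  also have "\<dots> = mmult A (mmult B C) r t"
    by (subst mmult_banded_eq_sum[OF A, of S1])
      (auto simp: S_def S1_def mmult_banded_eq_sum[OF B, of S] intro!: sum.cong)
  finally show "mmult (mmult A B) C r t = mmult A (mmult B C) r t" .
qed

lemma mpow_add_banded:
  assumes "banded A w"
  shows "mpow A (l + k) = mmult (mpow A l) (mpow A k)"
proof (induction l)
  case (Suc l)
  then show ?case
    by (simp add: mmult_assoc_banded[OF assms banded_mpow[OF assms]])
qed simp

definition mprod_powers :: "'i imat \<Rightarrow> 'i imat \<Rightarrow> nat list \<Rightarrow> 'i imat" where
  "mprod_powers A Q ls = mprod_list (map (\<lambda>l. mmult (mpow A l) Q) ls)"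

lemma mprod_powers_Nil [simp]: "mprod_powers A Q [] = mone"
  by (simp add: mprod_powers_def)

lemma mprod_powers_Cons [simp]:
  "mprod_powers A Q (l # ls) = mmult (mmult (mpow A l) Q) (mprod_powers A Q ls)"
  by (simp add: mprod_powers_def)

lemma banded_mprod_powers:
  "banded A w \<Longrightarrow> banded Q 0 \<Longrightarrow> banded (mprod_powers A Q ls) (w * sum_list ls)"
proof (induction ls)
  case (Cons l ls)
  then show ?case
    using banded_mmult[OF banded_mmult[OF banded_mpow[of A w l] Cons.prems(2)] Cons.IH]
    by (simp add: algebra_simps)
qed (simp add: banded_mone)

lemma mprod_powers_mone:
  "banded A w \<Longrightarrow> mprod_powers A mone ls = mpow A (sum_list ls)"
  by (induction ls) (simp_all add: mpow_add_banded)

section \<open>Locality of products of banded matrices\<close>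

text \<open>
  Entry (r,t) of a product of matrices of total bandwidth w is a sum over paths from r to t
  with at most w steps in total, and every index p on such a path satisfies
  |p - r| + |p - t| \<le> w.
\<close>

definition agree_near :: "int set \<Rightarrow> nat \<Rightarrow> int imat \<Rightarrow> int imat \<Rightarrow> bool" where
  "agree_near J w X Y \<longleftrightarrow>
     (\<forall>r t. (\<forall>p. \<bar>p - r\<bar> + \<bar>p - t\<bar> \<le> int w \<longrightarrow> p \<in> J) \<longrightarrow> X r t = Y r t)"

lemma agree_near_refl: "agree_near J w X X"
  by (simp add: agree_near_def)

lemma agree_near_banded:
  assumes "banded X w" "banded Y w" "\<And>p q. p \<in> J \<Longrightarrow> q \<in> J \<Longrightarrow> X p q = Y p q"
  shows "agree_near J w X Y"
  unfolding agree_near_def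
proof (intro allI impI)
  fix r t
  assume J: "\<forall>p. \<bar>p - r\<bar> + \<bar>p - t\<bar> \<le> int w \<longrightarrow> p \<in> J"
  show "X r t = Y r t"
  proof (cases "\<bar>r - t\<bar> > int w")
    case True
    then show ?thesis
      using assms(1,2) by (simp add: banded_def)
  next
    case False
    then have "r \<in> J" "t \<in> J"
      using J[rule_format, of r] J[rule_format, of t] by auto
    then show ?thesis
      using assms(3) by blast
  qed
qed

lemma agree_near_mmult:
  assumes X: "banded X w" "banded X' w" "agree_near J w X X'"
    and Y: "banded Y v" "banded Y' v" "agree_near J v Y Y'"
  shows "agree_near J (w + v) (mmult X Y) (mmult X' Y')"
  unfolding agree_near_def
proof (intro allI impI)
  fix r t
  assume J: "\<forall>p. \<bar>p - r\<bar> + \<bar>p - t\<bar> \<le> int (w + v) \<longrightarrow> p \<in> J"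
  define S where "S = {r - int w..r + int w}"
  have "X r k * Y k t = X' r k * Y' k t" if "k \<in> S" for k
  proof (cases "\<bar>k - t\<bar> > int v")
    case True
    then show ?thesis
      using Y(1,2) by (simp add: banded_def)
  next
    case False
    have kr: "\<bar>k - r\<bar> \<le> int w"
      using that by (auto simp: S_def)
    have "p \<in> J" if "\<bar>p - r\<bar> + \<bar>p - k\<bar> \<le> int w" for p
      using J[rule_format, of p] False that by arith
    then have Xrk: "X r k = X' r k"
      using X(3) by (simp add: agree_near_def)
    have "p \<in> J" if "\<bar>p - k\<bar> + \<bar>p - t\<bar> \<le> int v" for p
      using J[rule_format, of p] kr that by arith
    then have "Y k t = Y' k t"
      using Y(3) by (simp add: agree_near_def)
    with Xrk show ?thesis
      by simp
  qed
  then show "mmult X Y r t = mmult X' Y' r t"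
    by (simp add: mmult_banded_eq_sum[OF X(1), of S] mmult_banded_eq_sum[OF X(2), of S] S_def)
qed

lemma agree_near_mpow:
  assumes "banded A w" "banded A' w" "agree_near J w A A'"
  shows "agree_near J (l * w) (mpow A l) (mpow A' l)"
proof (induction l)
  case (Suc l)
  then show ?case
    using agree_near_mmult[OF assms banded_mpow[OF assms(1)] banded_mpow[OF assms(2)]] by simp
qed (simp add: agree_near_refl)

lemma agree_near_mprod_powers:
  assumes A: "banded A w" "banded A' w" "agree_near J w A A'"
    and Q: "banded Q 0" "banded Q' 0" "agree_near J 0 Q Q'"
  shows "agree_near J (w * sum_list ls) (mprod_powers A Q ls) (mprod_powers A' Q' ls)"
proof (induction ls)
  case (Cons l ls)
  have "agree_near J (l * w + 0) (mmult (mpow A l) Q) (mmult (mpow A' l) Q')"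
    by (rule agree_near_mmult[OF banded_mpow[OF A(1)] banded_mpow[OF A(2)] agree_near_mpow[OF A] Q])
  from agree_near_mmult[OF banded_mmult[OF banded_mpow[OF A(1)] Q(1)]
      banded_mmult[OF banded_mpow[OF A(2)] Q(2)] this
      banded_mprod_powers[OF A(1) Q(1)] banded_mprod_powers[OF A(2) Q(2)] Cons.IH]
  show ?case
    by (simp add: algebra_simps)
qed (simp add: agree_near_refl)

lemma agree_near_diag:
  assumes "agree_near J w X Y" "\<And>p. 2 * \<bar>p - r\<bar> \<le> int w \<Longrightarrow> p \<in> J"
  shows "X r r = Y r r"
  using assms unfolding agree_near_def by auto

lemma banded_Pminus: "banded Pminus w"
  by (simp add: Pminus_def banded_proj)

lemma agree_near_Pminus_mone: "agree_near {p. p < 0} 0 Pminus mone"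
  by (rule agree_near_banded[OF banded_Pminus banded_mone]) (simp add: Pminus_def proj_def mone_def)

lemma mprod_powers_Pminus_diag:
  assumes "banded A w" "2 * r + int (w * sum_list ls) < 0"
  shows "mprod_powers A Pminus ls r r = mpow A (sum_list ls) r r"
proof -
  have "agree_near {p. p < 0} (w * sum_list ls) (mprod_powers A Pminus ls) (mprod_powers A mone ls)"
    using assms(1) agree_near_Pminus_mone
    by (intro agree_near_mprod_powers) (auto simp: agree_near_refl banded_mone banded_Pminus)
  then have "mprod_powers A Pminus ls r r = mprod_powers A mone ls r r"
    by (rule agree_near_diag) (use assms(2) in \<open>simp del: of_nat_mult add: abs_if split: if_splits\<close>)
  then show ?thesis
    by (simp add: mprod_powers_mone[OF assms(1)])
qed

lemma diag_defect_trunc: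
  assumes A: "banded A w" and N: "w * sum_list ls \<le> N" and r: "r < 0"
  shows "mprod_powers A Pminus ls r r - mpow A (sum_list ls) r r
       = mprod_powers (trunc A N) Pminus ls r r - mpow (trunc A N) (sum_list ls) r r"
proof (cases "2 * r + int (w * sum_list ls) < 0")
  case True
  then show ?thesis
    using mprod_powers_Pminus_diag[OF A] mprod_powers_Pminus_diag[OF banded_trunc[OF A]] by simp
next
  case False
  let ?J = "{- int N..int N}"
  have near: "p \<in> ?J" if "2 * \<bar>p - r\<bar> \<le> int (w * sum_list ls)" for p
    using that False r N by (simp del: of_nat_mult add: abs_if split: if_splits)
  have AJ: "agree_near ?J w A (trunc A N)"
    by (rule agree_near_banded[OF A banded_trunc[OF A]]) (auto simp: trunc_def abs_le_iff)
  have "mprod_powers A Pminus ls r r = mprod_powers (trunc A N) Pminus ls r r"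
    using A banded_trunc[OF A] AJ
    by (intro agree_near_diag[OF agree_near_mprod_powers near])
      (auto simp: agree_near_refl banded_Pminus)
  moreover have "mpow A (sum_list ls) r r = mpow (trunc A N) (sum_list ls) r r"
    by (rule agree_near_diag[OF agree_near_mpow[OF A banded_trunc[OF A] AJ] near])
      (simp add: mult.commute)
  ultimately show ?thesis
    by simp
qed

section \<open>Trace defects\<close>

definition rows_vanish_below :: "int imat \<Rightarrow> nat \<Rightarrow> bool" where
  "rows_vanish_below A c \<longleftrightarrow> (\<forall>r k. r < - int c \<longrightarrow> A r k = 0)"

lemma rows_vanish_below_mono: "rows_vanish_below A c \<Longrightarrow> c \<le> d \<Longrightarrow> rows_vanish_below A d"
  unfolding rows_vanish_below_def by force

lemma rows_vanish_below_trunc: "rows_vanish_below (trunc A N) N"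
  unfolding rows_vanish_below_def trunc_def by auto

lemma mpow_row_zero: "rows_vanish_below A c \<Longrightarrow> r < - int c \<Longrightarrow> mpow A (Suc l) r t = 0"
  unfolding rows_vanish_below_def by (auto intro!: mmult_row_zero)

lemma mprod_powers_row_zero:
  assumes "rows_vanish_below A c" "r < - int c" "ls \<noteq> []" "0 \<notin> set ls"
  shows "mprod_powers A Q ls r t = 0"
proof -
  obtain l ls' where "ls = Suc l # ls'"
    using assms(3,4) by (metis list.exhaust list.set_intros(1) not0_implies_Suc)
  then show ?thesis
    using assms(1,2) by (auto simp: rows_vanish_below_def intro!: mmult_row_zero)
qed

lemma mprod_powers_col_zero:
  "ls \<noteq> [] \<Longrightarrow> (\<And>k. Q k t = 0) \<Longrightarrow> mprod_powers A Q ls r t = 0"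
proof (induction ls arbitrary: r)
  case (Cons l ls)
  then show ?case
    by (cases "ls = []") (auto intro!: mmult_col_zero)
qed simp

lemma sum_list_pos: "ls \<noteq> [] \<Longrightarrow> 0 \<notin> set ls \<Longrightarrow> 0 < sum_list (ls :: nat list)"
  by (cases ls) auto

lemma mtrace_eq_sum: "finite U \<Longrightarrow> (\<And>r. r \<notin> U \<Longrightarrow> X r r = 0) \<Longrightarrow> mtrace X = (\<Sum>r\<in>U. X r r)"
  unfolding mtrace_def by (rule infsum_eq_sum_support)

definition trace_defect :: "int imat \<Rightarrow> nat list \<Rightarrow> complex" where
  "trace_defect A ls =
     mtrace (mprod_powers A Pminus ls) - mtrace (mmult (mpow A (sum_list ls)) Pminus)"

lemma trace_defect_eq_sum:
  assumes A: "rows_vanish_below A c" and ls: "ls \<noteq> []" "0 \<notin> set ls"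
  shows "trace_defect A ls
       = (\<Sum>r\<in>{- int c..<0}. mprod_powers A Pminus ls r r - mpow A (sum_list ls) r r)"
proof -
  obtain m where m: "sum_list ls = Suc m"
    using sum_list_pos[OF ls] gr0_implies_Suc by blast
  have outside: "r \<ge> 0 \<or> r < - int c" if "r \<notin> {- int c..<0}" for r
    using that by auto
  have "mprod_powers A Pminus ls r r = 0" if "r \<notin> {- int c..<0}" for r
  proof (cases "r < 0")
    case True
    then show ?thesis
      using outside[OF that] mprod_powers_row_zero[OF A _ ls] by simp
  next
    case False
    then show ?thesis
      by (intro mprod_powers_col_zero[OF ls(1)]) (simp add: Pminus_def proj_def)
  qed
  then have "mtrace (mprod_powers A Pminus ls) = (\<Sum>r\<in>{- int c..<0}. mprod_powers A Pminus ls r r)"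
    by (intro mtrace_eq_sum) auto
  moreover have "mtrace (mmult (mpow A (sum_list ls)) Pminus)
      = (\<Sum>r\<in>{- int c..<0}. mpow A (sum_list ls) r r)"
    using outside mpow_row_zero[OF A]
    by (subst mtrace_eq_sum[of "{- int c..<0}"]) (auto simp: m Pminus_def mmult_proj_right)
  ultimately show ?thesis
    by (simp add: trace_defect_def sum_subtractf)
qed

lemma trace_defect_trunc:
  assumes A: "banded A w" "rows_vanish_below A c"
    and ls: "ls \<noteq> []" "0 \<notin> set ls" and N: "w * sum_list ls \<le> N"
  shows "trace_defect (trunc A N) ls = trace_defect A ls"
proof -
  have "rows_vanish_below (trunc A N) (c + N)" "rows_vanish_below A (c + N)"
    using rows_vanish_below_mono[OF rows_vanish_below_trunc] rows_vanish_below_mono[OF A(2)]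
    by simp_all
  then show ?thesis
    using diag_defect_trunc[OF A(1) N] by (simp add: trace_defect_eq_sum[OF _ ls])
qed

section \<open>Entrywise limits\<close>

definition entrywise_lim :: "(nat \<Rightarrow> 'i imat) \<Rightarrow> 'i imat \<Rightarrow> bool" where
  "entrywise_lim Xs X \<longleftrightarrow> (\<forall>r t. (\<lambda>j. Xs j r t) \<longlonglongrightarrow> X r t)"

lemma entrywise_lim_const: "entrywise_lim (\<lambda>j. X) X"
  by (simp add: entrywise_lim_def)

lemma entrywise_lim_mmult:
  assumes "\<And>j. banded (Xs j) w" "banded X w" "entrywise_lim Xs X" "entrywise_lim Ys Y"
  shows "entrywise_lim (\<lambda>j. mmult (Xs j) (Ys j)) (mmult X Y)"
  unfolding entrywise_lim_def
proof (intro allI)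
  fix r t
  define S where "S = {r - int w..r + int w}"
  have "(\<lambda>j. \<Sum>k\<in>S. Xs j r k * Ys j k t) \<longlonglongrightarrow> (\<Sum>k\<in>S. X r k * Y k t)"
    using assms(3,4) by (intro tendsto_intros) (auto simp: entrywise_lim_def)
  then show "(\<lambda>j. mmult (Xs j) (Ys j) r t) \<longlonglongrightarrow> mmult X Y r t"
    by (simp add: mmult_banded_eq_sum[OF assms(1), of S] mmult_banded_eq_sum[OF assms(2), of S] S_def)
qed

lemma entrywise_lim_mpow:
  assumes "\<And>j. banded (Xs j) w" "banded X w" "entrywise_lim Xs X"
  shows "entrywise_lim (\<lambda>j. mpow (Xs j) l) (mpow X l)"
  by (induction l) (simp_all add: entrywise_lim_const entrywise_lim_mmult[OF assms])

lemma entrywise_lim_mprod_powers: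
  assumes "\<And>j. banded (Xs j) w" "banded X w" "entrywise_lim Xs X" "banded Q 0"
  shows "entrywise_lim (\<lambda>j. mprod_powers (Xs j) Q ls) (mprod_powers X Q ls)"
proof (induction ls)
  case (Cons l ls)
  have "entrywise_lim (\<lambda>j. mmult (mpow (Xs j) l) Q) (mmult (mpow X l) Q)"
    using assms
    by (intro entrywise_lim_mmult[where w = "l * w"] entrywise_lim_mpow entrywise_lim_const banded_mpow)
  from entrywise_lim_mmult[OF banded_mmult[OF banded_mpow[OF assms(1)] assms(4)]
      banded_mmult[OF banded_mpow[OF assms(2)] assms(4)] this Cons.IH]
  show ?case
    by simp
qed (simp add: entrywise_lim_const)

lemma tendsto_trace_defect:
  assumes "\<And>j. banded (Gs j) w" "banded G w" "entrywise_lim Gs G"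
    and "\<And>j. rows_vanish_below (Gs j) c" "rows_vanish_below G c"
    and ls: "ls \<noteq> []" "0 \<notin> set ls"
  shows "(\<lambda>j. trace_defect (Gs j) ls) \<longlonglongrightarrow> trace_defect G ls"
proof -
  have "(\<lambda>j. \<Sum>r\<in>{- int c..<0}. mprod_powers (Gs j) Pminus ls r r - mpow (Gs j) (sum_list ls) r r)
      \<longlonglongrightarrow> (\<Sum>r\<in>{- int c..<0}. mprod_powers G Pminus ls r r - mpow G (sum_list ls) r r)"
    using entrywise_lim_mprod_powers[OF assms(1-3) banded_Pminus, of ls]
      entrywise_lim_mpow[OF assms(1-3), of "sum_list ls"]
    by (intro tendsto_intros) (auto simp: entrywise_lim_def)
  then show ?thesis
    by (simp add: trace_defect_eq_sum[OF assms(4) ls] trace_defect_eq_sum[OF assms(5) ls])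
qed

lemma banded_entrywise_lim:
  assumes "\<And>j. banded (Xs j) w" "entrywise_lim Xs X"
  shows "banded X w"
  unfolding banded_def
proof (intro allI impI)
  fix r s
  assume "\<bar>r - s\<bar> > int w"
  then have "(\<lambda>j. Xs j r s) \<longlonglongrightarrow> 0"
    using assms(1) by (simp add: banded_def)
  moreover have "(\<lambda>j. Xs j r s) \<longlonglongrightarrow> X r s"
    using assms(2) by (simp add: entrywise_lim_def)
  ultimately show "X r s = 0"
    using LIMSEQ_unique by blast
qed

lemma entrywise_lim_trunc:
  assumes "entrywise_lim Xs X"
  shows "entrywise_lim (\<lambda>j. trunc (Xs j) N) (trunc X N)"
  unfolding entrywise_lim_def
proof (intro allI)
  fix r t
  show "(\<lambda>j. trunc (Xs j) N r t) \<longlonglongrightarrow> trunc X N r t"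
  proof (cases "\<bar>r\<bar> \<le> int N \<and> \<bar>t\<bar> \<le> int N")
    case True
    then show ?thesis
      using assms by (simp add: entrywise_lim_def trunc_def)
  next
    case False
    then show ?thesis
      by (simp only: trunc_def if_not_P[OF False] if_False tendsto_const)
  qed
qed

section \<open>Shifting \<nat>-indexed matrices to \<int>\<close>

definition shifted :: "nat \<Rightarrow> nat imat \<Rightarrow> int imat" where
  "shifted n X = (\<lambda>r s. ext_int X (int n + r) (int n + s))"

lemma banded_shifted:
  assumes "\<And>r s. \<bar>int r - int s\<bar> > int w \<Longrightarrow> X r s = 0"
  shows "banded (shifted n X) w"
  using assms by (auto simp: banded_def shifted_def ext_int_def)

lemma rows_vanish_below_shifted: "rows_vanish_below (shifted n X) n"
  by (simp add: rows_vanish_below_def shifted_def ext_int_def)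

lemma infsum_shift:
  assumes "\<And>k. int n + k < 0 \<Longrightarrow> f k = 0"
  shows "infsum f UNIV = (\<Sum>\<^sub>\<infinity>i::nat. f (int i - int n))"
proof -
  have bij: "bij_betw (\<lambda>i::nat. int i - int n) UNIV {k. int n + k \<ge> 0}"
    by (rule bij_betwI[where g = "\<lambda>k. nat (int n + k)"]) auto
  have "infsum f UNIV = infsum f {k. int n + k \<ge> 0}"
    by (rule infsum_cong_neutral) (use assms in auto)
  also have "\<dots> = (\<Sum>\<^sub>\<infinity>i::nat. f (int i - int n))"
    by (rule infsum_reindex_bij_betw[OF bij, symmetric])
  finally show ?thesis .
qed

lemma mmult_shifted: "mmult (shifted n X) (shifted n Y) = shifted n (mmult X Y)"
proof (intro ext)
  fix r t
  show "mmult (shifted n X) (shifted n Y) r t = shifted n (mmult X Y) r t"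
  proof (cases "int n + r \<ge> 0 \<and> int n + t \<ge> 0")
    case True
    have "mmult (shifted n X) (shifted n Y) r t
        = (\<Sum>\<^sub>\<infinity>i::nat. shifted n X r (int i - int n) * shifted n Y (int i - int n) t)"
      unfolding mmult_def by (rule infsum_shift) (auto simp: shifted_def ext_int_def)
    also have "\<dots> = shifted n (mmult X Y) r t"
      using True by (simp add: shifted_def ext_int_def mmult_def)
    finally show ?thesis .
  next
    case False
    then have "shifted n (mmult X Y) r t = 0"
      by (auto simp: shifted_def ext_int_def)
    moreover have "mmult (shifted n X) (shifted n Y) r t = 0"
    proof (cases "int n + r < 0")
      case True
      then show ?thesis
        by (intro mmult_row_zero) (simp add: shifted_def ext_int_def)
    next
      case False
      with \<open>\<not> (int n + r \<ge> 0 \<and> int n + t \<ge> 0)\<close> show ?thesis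
        by (intro mmult_col_zero) (simp add: shifted_def ext_int_def)
    qed
    ultimately show ?thesis
      by simp
  qed
qed

lemma mtrace_shifted: "mtrace (shifted n X) = mtrace X"
proof -
  have "mtrace (shifted n X) = (\<Sum>\<^sub>\<infinity>i::nat. shifted n X (int i - int n) (int i - int n))"
    unfolding mtrace_def by (rule infsum_shift) (auto simp: shifted_def ext_int_def)
  then show ?thesis
    by (simp add: shifted_def ext_int_def mtrace_def)
qed

lemma shifted_mpow_Suc: "shifted n (mpow X (Suc l)) = mpow (shifted n X) (Suc l)"
  by (induction l) (simp_all add: mmult_shifted[symmetric])

lemma shifted_mprod_list: "Xs \<noteq> [] \<Longrightarrow> shifted n (mprod_list Xs) = mprod_list (map (shifted n) Xs)"
proof (induction Xs)
  case (Cons X Xs)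
  then show ?case
    by (cases "Xs = []") (simp_all add: mmult_shifted[symmetric])
qed simp

lemma shifted_mpow_Pn:
  "shifted n (mmult (mpow X (Suc l)) (Pn n)) = mmult (mpow (shifted n X) (Suc l)) Pminus"
proof (intro ext)
  fix r t
  have "mmult (mpow (shifted n X) (Suc l)) Pminus r t
      = (if t < 0 then shifted n (mpow X (Suc l)) r t else 0)"
    by (simp only: shifted_mpow_Suc mmult_proj_right Pminus_def mem_Collect_eq)
  also have "\<dots> = shifted n (mmult (mpow X (Suc l)) (Pn n)) r t"
    by (auto simp: shifted_def ext_int_def mmult_proj_right Pn_def)
  finally show "shifted n (mmult (mpow X (Suc l)) (Pn n)) r t
      = mmult (mpow (shifted n X) (Suc l)) Pminus r t" ..
qed

lemma trace_Pn_defect_eq_trace_defect: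
  assumes ls: "ls \<noteq> []" "0 \<notin> set ls"
  shows "mtrace (mprod_list (map (\<lambda>l. mmult (mpow X l) (Pn n)) ls))
           - mtrace (mmult (mpow X (sum_list ls)) (Pn n))
       = trace_defect (shifted n X) ls"
proof -
  have shifted_factor: "shifted n (mmult (mpow X l) (Pn n)) = mmult (mpow (shifted n X) l) Pminus"
    if "l \<noteq> 0" for l
    using that shifted_mpow_Pn[of n X "l - 1"] by simp
  have factors: "map (\<lambda>l. shifted n (mmult (mpow X l) (Pn n))) ls
      = map (\<lambda>l. mmult (mpow (shifted n X) l) Pminus) ls"
    by (intro list.map_cong0 shifted_factor) (metis ls(2))
  have "mtrace (mprod_list (map (\<lambda>l. mmult (mpow X l) (Pn n)) ls))
      = mtrace (mprod_list (map (shifted n) (map (\<lambda>l. mmult (mpow X l) (Pn n)) ls)))"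
    using ls(1) by (metis mtrace_shifted shifted_mprod_list map_is_Nil_conv)
  also have "\<dots> = mtrace (mprod_powers (shifted n X) Pminus ls)"
    by (simp only: map_map o_def factors mprod_powers_def)
  finally have "mtrace (mprod_list (map (\<lambda>l. mmult (mpow X l) (Pn n)) ls))
      = mtrace (mprod_powers (shifted n X) Pminus ls)" .
  moreover have "mtrace (mmult (mpow X (sum_list ls)) (Pn n))
      = mtrace (mmult (mpow (shifted n X) (sum_list ls)) Pminus)"
    using sum_list_pos[OF ls] by (metis mtrace_shifted shifted_factor not_gr0)
  ultimately show ?thesis
    by (simp add: trace_defect_def)
qed

lemma trace_Pminus_defect_eq_trace_defect:
  assumes G: "rows_vanish_below G c" and ls: "ls \<noteq> []" "0 \<notin> set ls"
  shows "mtrace (mdiff (mprod_list (map (\<lambda>l. mmult (mmult Pminus (mpow G l)) Pminus) ls))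
                       (mmult (mmult Pminus (mpow G (sum_list ls))) Pminus))
       = trace_defect G ls"
proof -
  let ?X = "mprod_powers G Pminus ls"
  let ?Y = "mmult (mmult Pminus (mpow G (sum_list ls))) Pminus"
  obtain m where m: "sum_list ls = Suc m"
    using sum_list_pos[OF ls] gr0_implies_Suc by blast
  have "mprod_list (map (\<lambda>l. mmult (mmult Pminus (mpow G l)) Pminus) ls)
      = mprod_list (map (mmult Pminus) (map (\<lambda>l. mmult (mpow G l) Pminus) ls))"
    by (simp add: Pminus_def mmult_proj_assoc o_def)
  also have "\<dots> = mmult Pminus ?X"
    unfolding Pminus_def mprod_powers_def
    using ls(1) by (intro mprod_list_map_proj_left) (auto simp: mmult_proj_right)
  finally have X: "mprod_list (map (\<lambda>l. mmult (mmult Pminus (mpow G l)) Pminus) ls)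
      = mmult Pminus ?X" .
  have "mtrace (mdiff (mmult Pminus ?X) ?Y)
      = (\<Sum>r\<in>{- int c..<0}. ?X r r - mpow G (sum_list ls) r r)"
  proof (subst mtrace_eq_sum[of "{- int c..<0}"])
    fix r :: int
    assume "r \<notin> {- int c..<0}"
    then consider "r \<ge> 0" | "r < - int c"
      by fastforce
    then show "mdiff (mmult Pminus ?X) ?Y r r = 0"
    proof cases
      case 2
      then show ?thesis
        using mprod_powers_row_zero[OF G 2 ls] mpow_row_zero[OF G 2]
        by (simp add: m mdiff_def Pminus_def mmult_proj_left mmult_proj_right)
    qed (simp add: mdiff_def Pminus_def mmult_proj_left mmult_proj_right)
  qed (auto simp: mdiff_def Pminus_def mmult_proj_left mmult_proj_right)
  then show ?thesis
    by (simp add: X trace_defect_eq_sum[OF G ls])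
qed

section \<open>The two sides as defect sums\<close>

definition defect_sum :: "nat \<Rightarrow> int imat \<Rightarrow> complex" where
  "defect_sum m G =
     (\<Sum>j=2..m. ((-1)^j / of_nat j) * (\<Sum>ls\<in>comps m j. trace_defect G ls / factprod ls))"

lemma comps_nonempty_nonzero:
  "ls \<in> comps m j \<Longrightarrow> 1 \<le> j \<Longrightarrow> ls \<noteq> [] \<and> 0 \<notin> set ls \<and> sum_list ls = m"
  by (auto simp: comps_def)

lemma Cm_eq_defect_sum:
  assumes "banded (shifted n X) w" "w * m \<le> N"
  shows "Cm m n X = defect_sum m (trunc (shifted n X) N)"
  unfolding Cm_def defect_sum_def
proof (intro sum.cong refl arg_cong[where f = "\<lambda>x. _ * x"] arg_cong[where f = "\<lambda>x. x / _"])
  fix j ls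
  assume "j \<in> {2..m}" "ls \<in> comps m j"
  then have ls: "ls \<noteq> []" "0 \<notin> set ls" "sum_list ls = m"
    using comps_nonempty_nonzero by auto
  show "mtrace (mprod_list (map (\<lambda>l. mmult (mpow X l) (Pn n)) ls)) - mtrace (mmult (mpow X m) (Pn n))
      = trace_defect (trunc (shifted n X) N) ls"
    using trace_Pn_defect_eq_trace_defect[OF ls(1,2), of X n]
      trace_defect_trunc[OF assms(1) rows_vanish_below_shifted ls(1,2)] assms(2) ls(3)
    by simp
qed

lemma Dm_eq_defect_sum:
  assumes G: "rows_vanish_below G c" and m: "1 \<le> m"
  shows "Dm m G = defect_sum m G"
proof -
  define D where "D ls = mtrace (mdiff (mprod_list (map (\<lambda>l. mmult (mmult Pminus (mpow G l)) Pminus) ls))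
      (mmult (mmult Pminus (mpow G (sum_list ls))) Pminus))" for ls
  define f where "f j = ((-1)^j / of_nat j) * (\<Sum>ls\<in>comps m j. D ls / factprod ls)" for j
  have "Dm m G = sum f {1..m}"
    unfolding Dm_def f_def D_def
    by (intro sum.cong refl arg_cong[where f = "\<lambda>x. _ * x"]) (simp add: comps_def)
  also have "\<dots> = f 1 + sum f {2..m}"
    using sum.atLeast_Suc_atMost[OF m, of f] by (simp add: numeral_2_eq_2)
  also have "f 1 = 0"
    unfolding f_def D_def by (auto simp: comps_def length_Suc_conv mdiff_def mtrace_def intro!: sum.neutral)
  also have "sum f {2..m} = defect_sum m G"
    unfolding defect_sum_def f_def D_def
    by (intro sum.cong refl arg_cong[where f = "\<lambda>x. _ * x"])
      (auto simp: trace_Pminus_defect_eq_trace_defect[OF G] dest!: comps_nonempty_nonzero)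
  finally show ?thesis
    by simp
qed

lemma tendsto_defect_sum:
  assumes "\<And>j. banded (Gs j) w" "banded G w" "entrywise_lim Gs G"
    and "\<And>j. rows_vanish_below (Gs j) c" "rows_vanish_below G c"
  shows "(\<lambda>j. defect_sum m (Gs j)) \<longlonglongrightarrow> defect_sum m G"
  unfolding defect_sum_def divide_inverse[where b = "factprod _"]
  using assms comps_nonempty_nonzero
  by (intro tendsto_intros tendsto_trace_defect) auto

lemma entrywise_lim_right_limit:
  "right_limit B ns BR \<Longrightarrow> entrywise_lim (\<lambda>j. shifted (ns j) (B (ns j))) BR"
  by (simp add: right_limit_def entrywise_lim_def shifted_def)

theorem lemma4p3:
  fixes B :: "nat \<Rightarrow> nat \<Rightarrow> nat \<Rightarrow> complex"
    and b M :: nat and ns :: "nat \<Rightarrow> nat" and BR :: "int \<Rightarrow> int \<Rightarrow> complex"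
  assumes band: "\<And>n r s. \<bar>int r - int s\<bar> > int b \<Longrightarrow> B n r s = 0"
    and rl: "right_limit B ns BR"
  shows "\<forall>m\<in>{1..M}. (\<lambda>j. Cm m (ns j) (B (ns j))) \<longlonglongrightarrow> Dm m (trunc BR (b * M))"
proof
  fix m
  assume m: "m \<in> {1..M}"
  define As where "As j = shifted (ns j) (B (ns j))" for j
  have banded_As: "banded (As j) b" for j
    unfolding As_def using band by (rule banded_shifted)
  have lim: "entrywise_lim As BR"
    unfolding As_def using rl by (rule entrywise_lim_right_limit)
  have "(\<lambda>j. defect_sum m (trunc (As j) (b * M))) \<longlonglongrightarrow> defect_sum m (trunc BR (b * M))"
    by (rule tendsto_defect_sum[OF banded_trunc[OF banded_As] banded_trunc[OF banded_entrywise_lim[OF banded_As lim]]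
          entrywise_lim_trunc[OF lim] rows_vanish_below_trunc rows_vanish_below_trunc])
  moreover have "Cm m (ns j) (B (ns j)) = defect_sum m (trunc (As j) (b * M))" for j
    unfolding As_def using m by (intro Cm_eq_defect_sum banded_shifted band) auto
  moreover have "Dm m (trunc BR (b * M)) = defect_sum m (trunc BR (b * M))"
    using m by (intro Dm_eq_defect_sum[OF rows_vanish_below_trunc]) auto
  ultimately show "(\<lambda>j. Cm m (ns j) (B (ns j))) \<longlonglongrightarrow> Dm m (trunc BR (b * M))"
    by simp
qed

end
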